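(* Let \(m\) be a positive integer that is not a perfect square. Let \(\alpha_1,\alpha_2\in\mathbb N[\sqrt m]\setminus\{0\}\) be such that \((\alpha_1,\alpha_2)\) spans \(1\) in \(\mathbb Z[\sqrt m]\), and suppose that at least one of \(\alpha_1,\alpha_2\) has rational part \(0\) or irrational part \(0\). Then \[Frob(\alpha_1,\alpha_2)=(\alpha_1-1)(\alpha_2-1)(1+\sqrt m)+\mathbb N[\sqrt m].\]
   Context: \(\mathbb N\) denotes the set of non-negative integers. \(\mathbb Z[\sqrt m]=\{u+v\sqrt m\mid u,v\in\mathbb Z\}\) and \(\mathbb N[\sqrt m]=\{u+v\sqrt m\mid u,v\in\mathbb N\}\); every element of \(\mathbb Z[\sqrt m]\) is uniquely \(u+v\sqrt m\) with \(u,v\in\mathbb Z\), and \(u\), \(v\) are its rational and irrational parts. A pair \((\alpha_1,\alpha_2)\) spans \(1\) in \(\mathbb Z[\sqrt m]\) if \(\lambda_1\alpha_1+\lambda_2\alpha_2=1\) for some \(\lambda_1,\lambda_2\in\mathbb Z[\sqrt m]\). \(SG(\alpha_1,\alpha_2)=\{\lambda_1\alpha_1+\lambda_2\alpha_2\mid \lambda_1,\lambda_2\in\mathbb N[\sqrt m]\}\) and \(Frob(\alpha_1,\alpha_2)=\{w\in\mathbb Z[\sqrt m]\mid w+\mathbb N[\sqrt m]\subseteq SG(\alpha_1,\alpha_2)\}\). *)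

theory Defs
  imports Complex_Main
begin

definition Zsqrt :: "nat \<Rightarrow> real set" where
  "Zsqrt m = {of_int u + of_int v * sqrt (real m) | u v. True}"

definition Nsqrt :: "nat \<Rightarrow> real set" where
  "Nsqrt m = {of_nat u + of_nat v * sqrt (real m) | u v. True}"

text \<open>Rational and irrational parts (well defined when m is not a perfect square).\<close>

definition rat_part :: "nat \<Rightarrow> real \<Rightarrow> int" where
  "rat_part m x = fst (THE p. x = of_int (fst p) + of_int (snd p) * sqrt (real m))"

definition irr_part :: "nat \<Rightarrow> real \<Rightarrow> int" where
  "irr_part m x = snd (THE p. x = of_int (fst p) + of_int (snd p) * sqrt (real m))"

definition spans_one :: "nat \<Rightarrow> real \<Rightarrow> real \<Rightarrow> bool" where
  "spans_one m a1 a2 \<longleftrightarrow> (\<exists>l1\<in>Zsqrt m. \<exists>l2\<in>Zsqrt m. l1 * a1 + l2 * a2 = 1)"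

definition SG :: "nat \<Rightarrow> real \<Rightarrow> real \<Rightarrow> real set" where
  "SG m a1 a2 = {l1 * a1 + l2 * a2 | l1 l2. l1 \<in> Nsqrt m \<and> l2 \<in> Nsqrt m}"

definition Frob :: "nat \<Rightarrow> real \<Rightarrow> real \<Rightarrow> real set" where
  "Frob m a1 a2 = {w \<in> Zsqrt m. (\<lambda>x. w + x) ` Nsqrt m \<subseteq> SG m a1 a2}"

end

theory Submission
  imports Defs "HOL-Computational_Algebra.Nth_Powers"
begin

text \<open>
  If \<open>a\<close> has rational or irrational part \<open>0\<close>, then \<open>a\<close> multiplies \<open>\<int>[\<surd>m]\<close> onto a rectangular
  lattice \<open>d\<^sub>1\<int> + d\<^sub>2\<int>\<surd>m\<close> and \<open>\<nat>[\<surd>m]\<close> onto its nonnegative part, so the box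
  \<open>{r\<^sub>1 + r\<^sub>2\<surd>m | 0 \<le> r\<^sub>i < d\<^sub>i}\<close> is a system of residues modulo \<open>a\<close>, and its top corner
  \<open>e = (d\<^sub>1 - 1) + (d\<^sub>2 - 1)\<surd>m\<close> equals \<open>(a - 1)(1 + \<surd>m)\<close>. Since \<open>b\<close> is a unit modulo \<open>a\<close>, every
  \<open>z\<close> is uniquely \<open>a t + \<lambda> b\<close> with \<open>\<lambda>\<close> in the box, and as in the classical two-generator
  Frobenius problem \<open>z\<close> lies in the semigroup iff \<open>t \<in> \<nat>[\<surd>m]\<close>. The extreme case \<open>\<lambda> = e\<close>,
  \<open>t = -1\<close> shows that the Frobenius set is \<open>e b - e + \<nat>[\<surd>m]\<close>, i.e. \<open>(a - 1)(b - 1)(1 + \<surd>m) + \<nat>[\<surd>m]\<close>.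
\<close>

definition of_parts :: "nat \<Rightarrow> int \<Rightarrow> int \<Rightarrow> real" where
  "of_parts m u v = of_int u + of_int v * sqrt (real m)"

lemma of_parts_add: "of_parts m u v + of_parts m u' v' = of_parts m (u + u') (v + v')"
  by (simp add: of_parts_def algebra_simps)

lemma of_parts_diff: "of_parts m u v - of_parts m u' v' = of_parts m (u - u') (v - v')"
  by (simp add: of_parts_def algebra_simps)

lemma of_parts_mult:
  "of_parts m u v * of_parts m u' v' = of_parts m (u * u' + int m * v * v') (u * v' + v * u')"
proof -
  have "of_parts m u v * of_parts m u' v' = of_int u * of_int u' + of_int v * of_int v' * real m
      + (of_int u * of_int v' + of_int v * of_int u') * sqrt (real m)"
    by (simp add: of_parts_def algebra_simps flip: power2_eq_square)
  then show ?thesis by (simp add: of_parts_def)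
qed

lemma of_parts_eq_iff:
  assumes "\<not> (\<exists>k::nat. m = k ^ 2)"
  shows "of_parts m u v = of_parts m u' v' \<longleftrightarrow> u = u' \<and> v = v'"
proof
  assume eq: "of_parts m u v = of_parts m u' v'"
  show "u = u' \<and> v = v'"
  proof (cases "v = v'")
    case True
    then show ?thesis using eq by (simp add: of_parts_def)
  next
    case False
    have "of_int (v - v') * sqrt (real m) = of_int (u' - u)"
      using eq by (simp add: of_parts_def algebra_simps)
    then have "(of_int (v - v') * sqrt (real m))^2 = (of_int (u' - u))^2" by simp
    then have "real_of_int ((v - v')^2) * real m = real_of_int ((u' - u)^2)"
      by (simp add: power_mult_distrib)
    then have "int m * (v - v')^2 = (u' - u)^2"
      by (metis mult.commute of_int_eq_iff of_int_mult of_int_of_nat_eq)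
    then have "int (m * (nat \<bar>v - v'\<bar>)^2) = int ((nat \<bar>u' - u\<bar>)^2)" by simp
    then have "is_nth_power 2 (m * (nat \<bar>v - v'\<bar>)^2)"
      by (metis is_nth_power_nth_power of_nat_eq_iff)
    then have "is_nth_power 2 m"
      using False is_nth_power_mult_cancel_right[of 2 "(nat \<bar>v - v'\<bar>)^2" m] by simp
    then show ?thesis using assms by (auto elim!: is_nth_powerE)
  qed
qed simp

lemma mem_Zsqrt_iff: "x \<in> Zsqrt m \<longleftrightarrow> (\<exists>u v. x = of_parts m u v)"
  by (auto simp: Zsqrt_def of_parts_def)

lemma mem_Nsqrt_iff: "x \<in> Nsqrt m \<longleftrightarrow> (\<exists>u v. 0 \<le> u \<and> 0 \<le> v \<and> x = of_parts m u v)"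
proof
  assume "x \<in> Nsqrt m"
  then obtain u v :: nat where "x = of_nat u + of_nat v * sqrt (real m)"
    by (auto simp: Nsqrt_def)
  then show "\<exists>u v. 0 \<le> u \<and> 0 \<le> v \<and> x = of_parts m u v"
    by (intro exI[of _ "int u"] exI[of _ "int v"]) (simp add: of_parts_def)
next
  assume "\<exists>u v. 0 \<le> u \<and> 0 \<le> v \<and> x = of_parts m u v"
  then obtain u v where "0 \<le> u" "0 \<le> v" "x = of_parts m u v" by blast
  then have "x = of_nat (nat u) + of_nat (nat v) * sqrt (real m)" by (simp add: of_parts_def)
  then show "x \<in> Nsqrt m" by (auto simp: Nsqrt_def)
qed

lemma of_parts_in_Zsqrt: "of_parts m u v \<in> Zsqrt m"
  using mem_Zsqrt_iff by blast

lemma of_parts_in_Nsqrt: "0 \<le> u \<Longrightarrow> 0 \<le> v \<Longrightarrow> of_parts m u v \<in> Nsqrt m"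
  using mem_Nsqrt_iff by blast

lemma of_parts_in_Nsqrt_iff:
  "\<not> (\<exists>k::nat. m = k ^ 2) \<Longrightarrow> of_parts m u v \<in> Nsqrt m \<longleftrightarrow> 0 \<le> u \<and> 0 \<le> v"
  using mem_Nsqrt_iff of_parts_eq_iff by metis

lemma Nsqrt_subset_Zsqrt: "Nsqrt m \<subseteq> Zsqrt m"
  using mem_Nsqrt_iff mem_Zsqrt_iff by blast

lemma Zsqrt_add: "x \<in> Zsqrt m \<Longrightarrow> y \<in> Zsqrt m \<Longrightarrow> x + y \<in> Zsqrt m"
  using mem_Zsqrt_iff of_parts_add by metis

lemma Zsqrt_uminus: "x \<in> Zsqrt m \<Longrightarrow> - x \<in> Zsqrt m"
  unfolding mem_Zsqrt_iff of_parts_def by (metis of_int_minus minus_add_distrib mult_minus_left)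

lemma Zsqrt_diff: "x \<in> Zsqrt m \<Longrightarrow> y \<in> Zsqrt m \<Longrightarrow> x - y \<in> Zsqrt m"
  using mem_Zsqrt_iff of_parts_diff by metis

lemma Zsqrt_mult: "x \<in> Zsqrt m \<Longrightarrow> y \<in> Zsqrt m \<Longrightarrow> x * y \<in> Zsqrt m"
  using mem_Zsqrt_iff of_parts_mult by metis

lemma Nsqrt_add: "x \<in> Nsqrt m \<Longrightarrow> y \<in> Nsqrt m \<Longrightarrow> x + y \<in> Nsqrt m"
  unfolding mem_Nsqrt_iff by (metis of_parts_add add_nonneg_nonneg)

lemma Nsqrt_mult: "x \<in> Nsqrt m \<Longrightarrow> y \<in> Nsqrt m \<Longrightarrow> x * y \<in> Nsqrt m"
  unfolding mem_Nsqrt_iff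
  by (metis of_parts_mult add_nonneg_nonneg mult_nonneg_nonneg of_nat_0_le_iff)

lemma parts_of_parts:
  assumes "\<not> (\<exists>k::nat. m = k ^ 2)"
  shows "rat_part m (of_parts m u v) = u" and "irr_part m (of_parts m u v) = v"
proof -
  have "(THE p. of_parts m u v = of_int (fst p) + of_int (snd p) * sqrt (real m)) = (u, v)"
    using of_parts_eq_iff[OF assms] by (intro the_equality) (auto simp: of_parts_def)
  then show "rat_part m (of_parts m u v) = u" and "irr_part m (of_parts m u v) = v"
    unfolding rat_part_def irr_part_def by simp_all
qed

lemma spans_one_commute: "spans_one m a b \<Longrightarrow> spans_one m b a"
  unfolding spans_one_def by (metis add.commute)

lemma Frob_commute: "Frob m a b = Frob m b a"
proof -
  have "SG m a b = SG m b a" unfolding SG_def by (metis (no_types, lifting) add.commute)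
  then show ?thesis unfolding Frob_def by simp
qed

lemma spans_one_cancel:
  assumes "spans_one m a b" and "x \<in> Zsqrt m" and "x * b \<in> (*) a ` Zsqrt m"
  shows "x \<in> (*) a ` Zsqrt m"
proof -
  obtain \<mu> \<nu> where \<mu>: "\<mu> \<in> Zsqrt m" and \<nu>: "\<nu> \<in> Zsqrt m" and one: "\<mu> * a + \<nu> * b = 1"
    using assms(1) unfolding spans_one_def by blast
  obtain t where t: "t \<in> Zsqrt m" "x * b = a * t" using assms(3) by blast
  have "x = x * (\<mu> * a + \<nu> * b)" using one by simp
  also have "\<dots> = a * (x * \<mu> + \<nu> * t)" using t(2) by (simp add: algebra_simps)
  finally show ?thesis using assms(2) \<mu> \<nu> t(1) by (blast intro: Zsqrt_add Zsqrt_mult)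
qed

definition lattice :: "nat \<Rightarrow> int \<Rightarrow> int \<Rightarrow> real set" where
  "lattice m d1 d2 = {of_parts m (d1 * k1) (d2 * k2) | k1 k2. True}"

definition lattice_nonneg :: "nat \<Rightarrow> int \<Rightarrow> int \<Rightarrow> real set" where
  "lattice_nonneg m d1 d2 = {of_parts m (d1 * k1) (d2 * k2) | k1 k2. 0 \<le> k1 \<and> 0 \<le> k2}"

definition residue_box :: "nat \<Rightarrow> int \<Rightarrow> int \<Rightarrow> real set" where
  "residue_box m d1 d2 = {of_parts m r1 r2 | r1 r2. 0 \<le> r1 \<and> r1 < d1 \<and> 0 \<le> r2 \<and> r2 < d2}"

lemma residue_box_decomp:
  assumes "0 < d1" "0 < d2" "z \<in> Zsqrt m"
  shows "\<exists>r\<in>residue_box m d1 d2. z - r \<in> lattice m d1 d2"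
proof -
  obtain u v where z: "z = of_parts m u v" using assms(3) mem_Zsqrt_iff by blast
  have "of_parts m (u mod d1) (v mod d2) \<in> residue_box m d1 d2"
    using assms(1,2) unfolding residue_box_def by fastforce
  moreover have "z - of_parts m (u mod d1) (v mod d2) \<in> lattice m d1 d2"
    unfolding z of_parts_diff lattice_def by (auto simp: minus_mod_eq_mult_div)
  ultimately show ?thesis by blast
qed

lemma residue_box_subset_Nsqrt: "residue_box m d1 d2 \<subseteq> Nsqrt m"
  unfolding residue_box_def by (auto intro: of_parts_in_Nsqrt)

lemma corner_minus_residue_box:
  "r \<in> residue_box m d1 d2 \<Longrightarrow> of_parts m (d1 - 1) (d2 - 1) - r \<in> Nsqrt m"
  unfolding residue_box_def by (auto simp: of_parts_diff intro!: of_parts_in_Nsqrt)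

lemma nonneg_of_mult_add_pred_nonneg:
  fixes d k :: int
  assumes "0 < d" and "0 \<le> d * k + (d - 1)"
  shows "0 \<le> k"
proof -
  have "0 < d * (k + 1)" using assms(2) by (simp add: algebra_simps)
  then show ?thesis using assms(1) by (simp add: zero_less_mult_iff)
qed

lemma lattice_shift_corner_nonneg:
  assumes "\<not> (\<exists>k::nat. m = k ^ 2)" "0 < d1" "0 < d2"
    and "l \<in> lattice m d1 d2" and "l + of_parts m (d1 - 1) (d2 - 1) \<in> Nsqrt m"
  shows "l \<in> lattice_nonneg m d1 d2"
proof -
  obtain k1 k2 where l: "l = of_parts m (d1 * k1) (d2 * k2)"
    using assms(4) unfolding lattice_def by blast
  have "0 \<le> d1 * k1 + (d1 - 1)" "0 \<le> d2 * k2 + (d2 - 1)"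
    using assms(5) of_parts_in_Nsqrt_iff[OF assms(1)] unfolding l of_parts_add by blast+
  then show ?thesis
    unfolding l lattice_nonneg_def using assms(2,3) nonneg_of_mult_add_pred_nonneg by blast
qed

locale rectangular_generator =
  fixes m :: nat and a :: real and d1 d2 :: int
  assumes non_square: "\<not> (\<exists>k::nat. m = k ^ 2)"
    and side_pos: "0 < d1" "0 < d2"
    and multiples_Zsqrt: "(*) a ` Zsqrt m = lattice m d1 d2"
    and multiples_Nsqrt: "(*) a ` Nsqrt m = lattice_nonneg m d1 d2"
    and corner: "(a - 1) * (1 + sqrt (real m)) = of_parts m (d1 - 1) (d2 - 1)"
begin

abbreviation "e \<equiv> of_parts m (d1 - 1) (d2 - 1)"

lemma generator_in_Nsqrt: "a \<in> Nsqrt m"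
proof -
  have "1 \<in> Nsqrt m" using of_parts_in_Nsqrt[of 1 0 m] by (simp add: of_parts_def)
  then have "a * 1 \<in> lattice_nonneg m d1 d2" using multiples_Nsqrt by blast
  then show ?thesis
    using side_pos unfolding lattice_nonneg_def by (auto intro!: of_parts_in_Nsqrt)
qed

lemma shift_corner_in_multiples:
  "l \<in> (*) a ` Zsqrt m \<Longrightarrow> l + e \<in> Nsqrt m \<Longrightarrow> l \<in> (*) a ` Nsqrt m"
  using lattice_shift_corner_nonneg[OF non_square side_pos] multiples_Zsqrt multiples_Nsqrt
  by simp

lemma Frob_subset:
  assumes b: "b \<in> Nsqrt m" and "spans_one m a b" and w: "w \<in> Frob m a b"
  shows "w - (e * b - e) \<in> Nsqrt m"
proof -
  have wZ: "w \<in> Zsqrt m" and wF: "\<And>y. y \<in> Nsqrt m \<Longrightarrow> w + y \<in> SG m a b"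
    using w unfolding Frob_def by (auto simp: image_subset_iff)
  have bZ: "b \<in> Zsqrt m" using b Nsqrt_subset_Zsqrt by blast
  have "e * b - w \<in> Zsqrt m" using Zsqrt_diff[OF Zsqrt_mult[OF of_parts_in_Zsqrt bZ] wZ] .
  then obtain y where y: "y \<in> residue_box m d1 d2" and "e * b - w - y \<in> (*) a ` Zsqrt m"
    using residue_box_decomp[OF side_pos] unfolding multiples_Zsqrt by blast
  then obtain t where t: "t \<in> Zsqrt m" "e * b - w - y = a * t" by blast
  have "w + y \<in> SG m a b" using y residue_box_subset_Nsqrt wF by blast
  then obtain k l where k: "k \<in> Nsqrt m" and l: "l \<in> Nsqrt m" and wy: "w + y = k * a + l * b"
    unfolding SG_def by blast
  have kZ: "k \<in> Zsqrt m" and lZ: "l \<in> Zsqrt m" using k l Nsqrt_subset_Zsqrt by blast+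
  have "(l - e) * b = l * b - e * b" by (rule left_diff_distrib)
  also have "\<dots> = - (a * t) - k * a" using t(2) wy by linarith
  also have "\<dots> = a * (- (t + k))" by (simp add: algebra_simps)
  finally have "(l - e) * b \<in> (*) a ` Zsqrt m"
    using Zsqrt_uminus[OF Zsqrt_add[OF t(1) kZ]] by (rule image_eqI)
  with spans_one_cancel[OF assms(2) Zsqrt_diff[OF lZ of_parts_in_Zsqrt]]
  have "l - e \<in> (*) a ` Zsqrt m" .
  then have "l - e \<in> (*) a ` Nsqrt m" using l by (intro shift_corner_in_multiples) simp_all
  then obtain c where c: "c \<in> Nsqrt m" "l - e = a * c" by blast
  have le: "l - e \<in> Nsqrt m" unfolding c(2) using Nsqrt_mult[OF generator_in_Nsqrt c(1)] .
  have "w = k * a + l * b - y" using wy by simp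
  then have "w - (e * b - e) = (l - e) * b + k * a + (e - y)" by (simp add: algebra_simps)
  also have "\<dots> \<in> Nsqrt m"
    using le b k generator_in_Nsqrt corner_minus_residue_box[OF y] by (intro Nsqrt_add Nsqrt_mult)
  finally show ?thesis .
qed

lemma Frob_supset:
  assumes b: "b \<in> Nsqrt m" and "spans_one m a b" and n: "n \<in> Nsqrt m"
  shows "e * b - e + n \<in> Frob m a b"
proof -
  obtain \<mu> \<nu> where \<mu>: "\<mu> \<in> Zsqrt m" and \<nu>: "\<nu> \<in> Zsqrt m" and one: "\<mu> * a + \<nu> * b = 1"
    using assms(2) unfolding spans_one_def by blast
  have bZ: "b \<in> Zsqrt m" and nZ: "n \<in> Zsqrt m" using b n Nsqrt_subset_Zsqrt by blast+
  have wZ: "e * b - e + n \<in> Zsqrt m"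
    using Zsqrt_add[OF Zsqrt_diff[OF Zsqrt_mult[OF of_parts_in_Zsqrt bZ] of_parts_in_Zsqrt] nZ] .
  have "e * b - e + n + y \<in> SG m a b" if y: "y \<in> Nsqrt m" for y
  proof -
    define z where "z = e * b - e + n + y"
    have zZ: "z \<in> Zsqrt m" unfolding z_def using Zsqrt_add[OF wZ] y Nsqrt_subset_Zsqrt by blast
    obtain r where r: "r \<in> residue_box m d1 d2" and "z * \<nu> - r \<in> (*) a ` Zsqrt m"
      using residue_box_decomp[OF side_pos Zsqrt_mult[OF zZ \<nu>]] unfolding multiples_Zsqrt by blast
    then obtain t where t: "t \<in> Zsqrt m" "z * \<nu> - r = a * t" by blast
    have "z = z * (\<mu> * a + \<nu> * b)" using one by simp
    also have "\<dots> = z * \<mu> * a + (z * \<nu> - r) * b + r * b" by (simp add: algebra_simps)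
    also have "\<dots> = a * (z * \<mu> + t * b) + r * b" unfolding t(2) by (simp add: algebra_simps)
    finally have "z = a * (z * \<mu> + t * b) + r * b" .
    then have "z - r * b = a * (z * \<mu> + t * b)" unfolding diff_eq_eq .
    then have "z - r * b \<in> (*) a ` Zsqrt m"
      using Zsqrt_add[OF Zsqrt_mult[OF zZ \<mu>] Zsqrt_mult[OF t(1) bZ]] by (rule image_eqI)
    moreover have "z - r * b + e = (e - r) * b + n + y" unfolding z_def by (simp add: algebra_simps)
    then have "z - r * b + e \<in> Nsqrt m"
      using Nsqrt_add[OF Nsqrt_add[OF Nsqrt_mult[OF corner_minus_residue_box[OF r] b] n] y] by simp
    ultimately obtain k where k: "k \<in> Nsqrt m" "z - r * b = a * k"
      using shift_corner_in_multiples by blast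
    have "z = k * a + r * b" using k(2) by (simp add: diff_eq_eq mult.commute)
    then show ?thesis
      unfolding z_def SG_def using k(1) r residue_box_subset_Nsqrt by blast
  qed
  then show ?thesis unfolding Frob_def using wZ by (simp add: image_subset_iff add.assoc)
qed

theorem Frob_eq:
  assumes "b \<in> Nsqrt m" "spans_one m a b"
  shows "Frob m a b = (\<lambda>x. (a - 1) * (b - 1) * (1 + sqrt (real m)) + x) ` Nsqrt m"
proof -
  have "(a - 1) * (b - 1) * (1 + sqrt (real m)) = ((a - 1) * (1 + sqrt (real m))) * (b - 1)"
    by (simp only: ac_simps)
  also have "\<dots> = e * b - e" unfolding corner by (simp add: right_diff_distrib)
  finally have frobenius_element: "(a - 1) * (b - 1) * (1 + sqrt (real m)) = e * b - e" .
  have "Frob m a b = (\<lambda>x. e * b - e + x) ` Nsqrt m"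
  proof
    show "Frob m a b \<subseteq> (\<lambda>x. e * b - e + x) ` Nsqrt m"
    proof
      fix w assume "w \<in> Frob m a b"
      then show "w \<in> (\<lambda>x. e * b - e + x) ` Nsqrt m"
        by (intro image_eqI[where x = "w - (e * b - e)"]) (simp_all add: Frob_subset[OF assms])
    qed
    show "(\<lambda>x. e * b - e + x) ` Nsqrt m \<subseteq> Frob m a b"
      using Frob_supset[OF assms] by blast
  qed
  then show ?thesis unfolding frobenius_element .
qed

end

lemma rectangular_generator_of_int:
  assumes "\<not> (\<exists>k::nat. m = k ^ 2)" and "0 < u"
  shows "rectangular_generator m (of_parts m u 0) u u"
proof
  have mult: "of_parts m u 0 * of_parts m p q = of_parts m (u * p) (u * q)" for p q
    by (simp add: of_parts_mult)
  show "(*) (of_parts m u 0) ` Zsqrt m = lattice m u u"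
    unfolding lattice_def by (force simp: mem_Zsqrt_iff mult)
  show "(*) (of_parts m u 0) ` Nsqrt m = lattice_nonneg m u u"
    unfolding lattice_nonneg_def by (force simp: mem_Nsqrt_iff mult)
  have "of_parts m u 0 - 1 = of_parts m (u - 1) 0" "1 + sqrt (real m) = of_parts m 1 1"
    by (simp_all add: of_parts_def)
  then show "(of_parts m u 0 - 1) * (1 + sqrt (real m)) = of_parts m (u - 1) (u - 1)"
    by (simp add: of_parts_mult)
qed (use assms in auto)

lemma rectangular_generator_sqrt_multiple:
  assumes "\<not> (\<exists>k::nat. m = k ^ 2)" and "0 < v"
  shows "rectangular_generator m (of_parts m 0 v) (v * int m) v"
proof
  have "m \<noteq> 0" using assms(1) by (metis power_zero_numeral)
  then show "0 < v * int m" using assms(2) by simp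
  have mult: "of_parts m 0 v * of_parts m p q = of_parts m (v * int m * q) (v * p)" for p q
    by (simp add: of_parts_mult algebra_simps)
  show "(*) (of_parts m 0 v) ` Zsqrt m = lattice m (v * int m) v"
    unfolding lattice_def by (force simp: mem_Zsqrt_iff mult)
  show "(*) (of_parts m 0 v) ` Nsqrt m = lattice_nonneg m (v * int m) v"
    unfolding lattice_nonneg_def by (force simp: mem_Nsqrt_iff mult)
  have "of_parts m 0 v - 1 = of_parts m (- 1) v" "1 + sqrt (real m) = of_parts m 1 1"
    by (simp_all add: of_parts_def)
  then show "(of_parts m 0 v - 1) * (1 + sqrt (real m)) = of_parts m (v * int m - 1) (v - 1)"
    by (simp add: of_parts_mult algebra_simps)
qed (use assms in auto)

lemma Frob_of_zero_part:
  assumes ns: "\<not> (\<exists>k::nat. m = k ^ 2)"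
    and a: "a \<in> Nsqrt m - {0}" and b: "b \<in> Nsqrt m" and "spans_one m a b"
    and "rat_part m a = 0 \<or> irr_part m a = 0"
  shows "Frob m a b = (\<lambda>x. (a - 1) * (b - 1) * (1 + sqrt (real m)) + x) ` Nsqrt m"
proof -
  obtain u v where uv: "0 \<le> u" "0 \<le> v" and a_eq: "a = of_parts m u v"
    using a mem_Nsqrt_iff by blast
  have "u = 0 \<or> v = 0" using assms(5) parts_of_parts[OF ns] a_eq by metis
  then consider "u = 0" "0 < v" | "v = 0" "0 < u"
    using uv a a_eq by (force simp: of_parts_def)
  then show ?thesis
  proof cases
    case 1
    then interpret rectangular_generator m a "v * int m" v
      using rectangular_generator_sqrt_multiple[OF ns] a_eq by simp
    show ?thesis using Frob_eq[OF b assms(4)] .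
  next
    case 2
    then interpret rectangular_generator m a u u
      using rectangular_generator_of_int[OF ns] a_eq by simp
    show ?thesis using Frob_eq[OF b assms(4)] .
  qed
qed

theorem corollary3:
  fixes m :: nat and a1 a2 :: real
  assumes "m > 0"
    and "\<not> (\<exists>k::nat. m = k ^ 2)"
    and "a1 \<in> Nsqrt m - {0}" and "a2 \<in> Nsqrt m - {0}"
    and "spans_one m a1 a2"
    and "rat_part m a1 = 0 \<or> irr_part m a1 = 0 \<or> rat_part m a2 = 0 \<or> irr_part m a2 = 0"
  shows "Frob m a1 a2 = (\<lambda>x. (a1 - 1) * (a2 - 1) * (1 + sqrt (real m)) + x) ` Nsqrt m"
proof -
  consider "rat_part m a1 = 0 \<or> irr_part m a1 = 0" | "rat_part m a2 = 0 \<or> irr_part m a2 = 0"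
    using assms(6) by blast
  then show ?thesis
  proof cases
    case 1
    then show ?thesis using Frob_of_zero_part[OF assms(2,3)] assms(4,5) by blast
  next
    case 2
    then have "Frob m a2 a1 = (\<lambda>x. (a2 - 1) * (a1 - 1) * (1 + sqrt (real m)) + x) ` Nsqrt m"
      using Frob_of_zero_part[OF assms(2,4)] assms(3) spans_one_commute[OF assms(5)] by blast
    then show ?thesis by (simp add: Frob_commute mult.commute)
  qed
qed

end
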